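(* Let $X\in[0,1]^{N\times N}$ satisfy $\|D^TX\|_0+\|XD\|_0\leq s$ for some $s<2N^2$. Let $Q_{2D}(X)$ be the two-dimensional first-order $\Sigma\Delta$ quantization of $X$ with an alphabet of step size $\delta$, whose state matrix $u$ satisfies $X-Q_{2D}(X)=DuD^T$ and $\|u\|_{\max}\leq\delta/2$. Let $\hat X$ be a solution to $$\min_{Z\in\mathbb{R}^{N\times N}}\|D^TZ\|_1+\|ZD\|_1\quad\text{subject to}\quad\|D^{-1}(Z-Q_{2D}(X))(D^{-1})^T\|_{\max}\leq\delta/2.$$ Then $\|\hat X-X\|_F\leq C\sqrt{s}\,\delta$ for some absolute constant $C$.
   Context: $D$ is the $N\times N$ matrix with $1$ on the diagonal, $-1$ on the subdiagonal, $0$ elsewhere. For matrices, $\|\cdot\|_1$ is the entrywise $\ell_1$ norm, $\|\cdot\|_0$ the number of nonzero entries, $\|\cdot\|_{\max}$ the largest absolute entry. The two-dimensional first-order $\Sigma\Delta$ quantization with a finite alphabet $\mathcal{A}$ (step size $\delta$): with $u_{i,0}=u_{0,j}=0$, for $i,j\geq1$ set $q_{i,j}=Q_{\mathcal{A}}(u_{i,j-1}+u_{i-1,j}-u_{i-1,j-1}+X_{i,j})$ and $u_{i,j}=u_{i,j-1}+u_{i-1,j}-u_{i-1,j-1}+X_{i,j}-q_{i,j}$, where $Q_{\mathcal{A}}(z)$ is a nearest element of $\mathcal{A}$ to $z$; then $Q_{2D}(X)=q$ and $X-q=DuD^T$. The alphabet is assumed such that the scheme is stable with $\|u\|_{\max}\leq\delta/2$.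 *)

theory Defs
  imports "Jordan_Normal_Form.Matrix"
begin

definition Dmat :: "nat \<Rightarrow> real mat" where
  "Dmat N = mat N N (\<lambda>(i,j). if i = j then 1 else if i = j + 1 then -1 else 0)"

definition Dinv :: "nat \<Rightarrow> real mat" where
  "Dinv N = (SOME B. B \<in> carrier_mat N N \<and> Dmat N * B = 1\<^sub>m N \<and> B * Dmat N = 1\<^sub>m N)"

definition l1_norm :: "real mat \<Rightarrow> real" where
  "l1_norm A = (\<Sum>i<dim_row A. \<Sum>j<dim_col A. \<bar>A $$ (i,j)\<bar>)"

definition l0_norm :: "real mat \<Rightarrow> nat" where
  "l0_norm A = card {(i,j). i < dim_row A \<and> j < dim_col A \<and> A $$ (i,j) \<noteq> 0}"

definition max_norm :: "real mat \<Rightarrow> real" where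
  "max_norm A = Max (insert 0 {\<bar>A $$ (i,j)\<bar> | i j. i < dim_row A \<and> j < dim_col A})"

definition frob_norm :: "real mat \<Rightarrow> real" where
  "frob_norm A = sqrt (\<Sum>i<dim_row A. \<Sum>j<dim_col A. (A $$ (i,j))^2)"

text \<open>Extension of the state matrix by zeros: ext u i j = u_{i,j} in the paper's
  1-based indexing, with u_{i,0} = u_{0,j} = 0.\<close>
definition ext :: "real mat \<Rightarrow> nat \<Rightarrow> nat \<Rightarrow> real" where
  "ext u i j = (if i = 0 \<or> j = 0 then 0 else u $$ (i - 1, j - 1))"

definition sigma_delta_2D :: "nat \<Rightarrow> real set \<Rightarrow> real mat \<Rightarrow> real mat \<Rightarrow> real mat \<Rightarrow> bool" where
  "sigma_delta_2D N A X q u \<longleftrightarrow>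
     X \<in> carrier_mat N N \<and> q \<in> carrier_mat N N \<and> u \<in> carrier_mat N N \<and>
     (\<forall>i<N. \<forall>j<N.
        (let w = ext u (i+1) j + ext u i (j+1) - ext u i j + X $$ (i,j) in
          q $$ (i,j) \<in> A \<and> (\<forall>a\<in>A. \<bar>w - q $$ (i,j)\<bar> \<le> \<bar>w - a\<bar>) \<and>
          u $$ (i,j) = w - q $$ (i,j)))"

definition step_alphabet :: "real set \<Rightarrow> real \<Rightarrow> bool" where
  "step_alphabet A \<delta> \<longleftrightarrow> \<delta> > 0 \<and> (\<exists>a0 K. A = {a0 + real k * \<delta> | k. k \<le> K})"

definition feasible :: "nat \<Rightarrow> real \<Rightarrow> real mat \<Rightarrow> real mat \<Rightarrow> bool" where
  "feasible N \<delta> q Z \<longleftrightarrow> Z \<in> carrier_mat N N \<and>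
     max_norm (Dinv N * (Z - q) * transpose_mat (Dinv N)) \<le> \<delta> / 2"

definition objective :: "nat \<Rightarrow> real mat \<Rightarrow> real" where
  "objective N Z = l1_norm (transpose_mat (Dmat N) * Z) + l1_norm (Z * Dmat N)"

end

theory Submission
  imports Defs "Jordan_Normal_Form.Determinant" "HOL-Analysis.Convex"
begin

(* Put W = Xh - X. Since X and Xh are both feasible, W = D E D^T with |E| <= delta entrywise, so
   ||W||_F^2 = <D^T W D, E> <= delta ||D^T W D||_1 <= 2 delta ||D^T W||_1.
   Comparing the objective at Xh with its value at the feasible X is a cone condition: the l1 mass of
   D^T W and W D is at most twice their mass on the supports of D^T X and X D, which by Cauchy-Schwarz
   is at most sqrt s times their Frobenius norms, each <= 2 ||W||_F. Hence ||D^T W||_1 <= 8 sqrt s ||W||_F,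
   and so ||W||_F <= 16 sqrt s delta. *)

definition inner_mat :: "real mat \<Rightarrow> real mat \<Rightarrow> real" where
  "inner_mat A B = (\<Sum>i<dim_row A. \<Sum>j<dim_col A. A $$ (i,j) * B $$ (i,j))"

lemma index_mult_mat_sum:
  "A \<in> carrier_mat n p \<Longrightarrow> B \<in> carrier_mat p m \<Longrightarrow> i < n \<Longrightarrow> j < m \<Longrightarrow>
   (A * B) $$ (i,j) = (\<Sum>k<p. A $$ (i,k) * B $$ (k,j))"
  by (auto simp: scalar_prod_def atLeast0LessThan)

lemma sum_swap_inner:
  "(\<Sum>i\<in>I. \<Sum>j\<in>J. \<Sum>k\<in>K. f i j k) = (\<Sum>i\<in>I. \<Sum>k\<in>K. \<Sum>j\<in>J. f i j k)"
  by (rule sum.cong[OF refl], rule sum.swap)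

lemma frob_norm_nonneg: "frob_norm A \<ge> 0"
  by (simp add: frob_norm_def sum_nonneg)

lemma frob_norm_sq: "frob_norm A ^ 2 = (\<Sum>i<dim_row A. \<Sum>j<dim_col A. (A $$ (i,j))^2)"
  by (simp add: frob_norm_def sum_nonneg)

lemma frob_norm_sq_eq_inner_mat: "frob_norm A ^ 2 = inner_mat A A"
  unfolding frob_norm_sq inner_mat_def by (simp add: power2_eq_square)

lemma frob_norm_transpose: "frob_norm (transpose_mat A) = frob_norm A"
  unfolding frob_norm_def by (simp add: sum.swap[of _ "{..<dim_row A}"])

lemma l1_norm_nonneg: "l1_norm A \<ge> 0"
  by (simp add: l1_norm_def sum_nonneg)

lemma abs_le_max_norm: "i < dim_row A \<Longrightarrow> j < dim_col A \<Longrightarrow> \<bar>A $$ (i,j)\<bar> \<le> max_norm A"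
  unfolding max_norm_def by (rule Max_ge) (auto intro: finite_image_set2)

lemma max_norm_nonneg: "max_norm A \<ge> 0"
  unfolding max_norm_def by (rule Max_ge) (auto intro: finite_image_set2)

lemma inner_mat_mult_left:
  assumes A: "A \<in> carrier_mat n m" and B: "B \<in> carrier_mat n p" and C: "C \<in> carrier_mat p m"
  shows "inner_mat A (B * C) = inner_mat (transpose_mat B * A) C"
proof -
  have "inner_mat A (B * C) = (\<Sum>i<n. \<Sum>j<m. \<Sum>k<p. A $$ (i,j) * B $$ (i,k) * C $$ (k,j))"
    using A B C by (simp add: inner_mat_def index_mult_mat_sum[OF B C] sum_distrib_left mult.assoc
        del: index_mult_mat(1))
  also have "\<dots> = (\<Sum>i<n. \<Sum>k<p. \<Sum>j<m. A $$ (i,j) * B $$ (i,k) * C $$ (k,j))"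
    by (rule sum_swap_inner)
  also have "\<dots> = (\<Sum>k<p. \<Sum>i<n. \<Sum>j<m. A $$ (i,j) * B $$ (i,k) * C $$ (k,j))"
    by (rule sum.swap)
  also have "\<dots> = (\<Sum>k<p. \<Sum>j<m. \<Sum>i<n. A $$ (i,j) * B $$ (i,k) * C $$ (k,j))"
    by (rule sum_swap_inner)
  also have "\<dots> = inner_mat (transpose_mat B * A) C"
    using A B C by (simp add: inner_mat_def index_mult_mat_sum[of _ p n _ m] sum_distrib_left mult_ac
        del: index_mult_mat(1))
  finally show ?thesis .
qed

lemma inner_mat_mult_right:
  assumes A: "A \<in> carrier_mat n m" and B: "B \<in> carrier_mat n p" and C: "C \<in> carrier_mat p m"
  shows "inner_mat A (B * C) = inner_mat (A * transpose_mat C) B"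
proof -
  have "inner_mat A (B * C) = (\<Sum>i<n. \<Sum>j<m. \<Sum>k<p. A $$ (i,j) * B $$ (i,k) * C $$ (k,j))"
    using A B C by (simp add: inner_mat_def index_mult_mat_sum[OF B C] sum_distrib_left mult.assoc
        del: index_mult_mat(1))
  also have "\<dots> = (\<Sum>i<n. \<Sum>k<p. \<Sum>j<m. A $$ (i,j) * B $$ (i,k) * C $$ (k,j))"
    by (rule sum_swap_inner)
  also have "\<dots> = inner_mat (A * transpose_mat C) B"
    using A B C by (simp add: inner_mat_def index_mult_mat_sum[of _ n m _ p] sum_distrib_left mult_ac
        del: index_mult_mat(1))
  finally show ?thesis .
qed

lemma inner_mat_le_l1_norm:
  assumes "\<And>i j. i < dim_row A \<Longrightarrow> j < dim_col A \<Longrightarrow> \<bar>E $$ (i,j)\<bar> \<le> c"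
  shows "inner_mat A E \<le> c * l1_norm A"
proof -
  have "inner_mat A E \<le> (\<Sum>i<dim_row A. \<Sum>j<dim_col A. \<bar>A $$ (i,j)\<bar> * c)"
    unfolding inner_mat_def
  proof (intro sum_mono)
    fix i j assume "i \<in> {..<dim_row A}" "j \<in> {..<dim_col A}"
    then have "\<bar>A $$ (i,j)\<bar> * \<bar>E $$ (i,j)\<bar> \<le> \<bar>A $$ (i,j)\<bar> * c"
      using assms by (simp add: mult_left_mono)
    then show "A $$ (i,j) * E $$ (i,j) \<le> \<bar>A $$ (i,j)\<bar> * c"
      by (metis abs_ge_self abs_mult order_trans)
  qed
  also have "\<dots> = c * l1_norm A"
    by (simp add: l1_norm_def sum_distrib_left mult_ac)
  finally show ?thesis .
qed

lemma l1_norm_mult_le: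
  assumes M: "M \<in> carrier_mat n p" and B: "B \<in> carrier_mat p m"
    and row_sum: "\<And>k. k < p \<Longrightarrow> (\<Sum>j<m. \<bar>B $$ (k,j)\<bar>) \<le> c"
  shows "l1_norm (M * B) \<le> c * l1_norm M"
proof -
  have "l1_norm (M * B) = (\<Sum>i<n. \<Sum>j<m. \<bar>\<Sum>k<p. M $$ (i,k) * B $$ (k,j)\<bar>)"
    using M B by (simp add: l1_norm_def index_mult_mat_sum[OF M B] del: index_mult_mat(1))
  also have "\<dots> \<le> (\<Sum>i<n. \<Sum>j<m. \<Sum>k<p. \<bar>M $$ (i,k)\<bar> * \<bar>B $$ (k,j)\<bar>)"
    by (intro sum_mono order_trans[OF sum_abs]) (simp add: abs_mult)
  also have "\<dots> = (\<Sum>i<n. \<Sum>k<p. \<bar>M $$ (i,k)\<bar> * (\<Sum>j<m. \<bar>B $$ (k,j)\<bar>))"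
    by (subst sum_swap_inner) (simp add: sum_distrib_left)
  also have "\<dots> \<le> (\<Sum>i<n. \<Sum>k<p. \<bar>M $$ (i,k)\<bar> * c)"
    by (intro sum_mono mult_left_mono row_sum) auto
  also have "\<dots> = c * l1_norm M"
    using M by (simp add: l1_norm_def sum_distrib_left mult_ac)
  finally show ?thesis .
qed

lemma weighted_Cauchy_Schwarz:
  fixes b w :: "'a \<Rightarrow> real"
  shows "(\<Sum>k\<in>K. b k * w k)^2 \<le> (\<Sum>k\<in>K. \<bar>b k\<bar>) * (\<Sum>k\<in>K. \<bar>b k\<bar> * (w k)^2)"
proof -
  have "\<bar>\<Sum>k\<in>K. b k * w k\<bar> \<le> (\<Sum>k\<in>K. sqrt \<bar>b k\<bar> * (sqrt \<bar>b k\<bar> * \<bar>w k\<bar>))"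
    by (intro order_trans[OF sum_abs] sum_mono)
      (simp add: abs_mult real_sqrt_mult_self flip: mult.assoc)
  then have "(\<Sum>k\<in>K. b k * w k)^2 \<le> (\<Sum>k\<in>K. sqrt \<bar>b k\<bar> * (sqrt \<bar>b k\<bar> * \<bar>w k\<bar>))^2"
    using power_mono[OF _ abs_ge_zero, of _ _ 2] by fastforce
  also have "\<dots> \<le> (\<Sum>k\<in>K. (sqrt \<bar>b k\<bar>)^2) * (\<Sum>k\<in>K. (sqrt \<bar>b k\<bar> * \<bar>w k\<bar>)^2)"
    by (rule Cauchy_Schwarz_ineq_sum)
  also have "\<dots> = (\<Sum>k\<in>K. \<bar>b k\<bar>) * (\<Sum>k\<in>K. \<bar>b k\<bar> * (w k)^2)"
    by (simp add: power_mult_distrib)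
  finally show ?thesis .
qed

lemma frob_norm_mult_sq_le:
  assumes B: "B \<in> carrier_mat n p" and W: "W \<in> carrier_mat p m"
    and row_sum: "\<And>i. i < n \<Longrightarrow> (\<Sum>k<p. \<bar>B $$ (i,k)\<bar>) \<le> r"
    and col_sum: "\<And>k. k < p \<Longrightarrow> (\<Sum>i<n. \<bar>B $$ (i,k)\<bar>) \<le> c"
    and "r \<ge> 0"
  shows "frob_norm (B * W) ^ 2 \<le> r * c * frob_norm W ^ 2"
proof -
  have "frob_norm (B * W) ^ 2 = (\<Sum>i<n. \<Sum>j<m. (\<Sum>k<p. B $$ (i,k) * W $$ (k,j))^2)"
    using B W by (simp add: frob_norm_sq index_mult_mat_sum[OF B W] del: index_mult_mat(1))
  also have "\<dots> \<le> (\<Sum>i<n. \<Sum>j<m. r * (\<Sum>k<p. \<bar>B $$ (i,k)\<bar> * (W $$ (k,j))^2))"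
  proof (intro sum_mono)
    fix i j assume "i \<in> {..<n}"
    then have "(\<Sum>k<p. \<bar>B $$ (i,k)\<bar>) * (\<Sum>k<p. \<bar>B $$ (i,k)\<bar> * (W $$ (k,j))^2)
        \<le> r * (\<Sum>k<p. \<bar>B $$ (i,k)\<bar> * (W $$ (k,j))^2)"
      using row_sum by (intro mult_right_mono sum_nonneg) auto
    with weighted_Cauchy_Schwarz
    show "(\<Sum>k<p. B $$ (i,k) * W $$ (k,j))^2 \<le> r * (\<Sum>k<p. \<bar>B $$ (i,k)\<bar> * (W $$ (k,j))^2)"
      by (rule order_trans)
  qed
  also have "\<dots> = r * (\<Sum>j<m. \<Sum>i<n. \<Sum>k<p. \<bar>B $$ (i,k)\<bar> * (W $$ (k,j))^2)"
    by (simp add: sum_distrib_left sum.swap[of _ "{..<n}"])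
  also have "\<dots> = r * (\<Sum>j<m. \<Sum>k<p. (\<Sum>i<n. \<bar>B $$ (i,k)\<bar>) * (W $$ (k,j))^2)"
    by (simp add: sum_distrib_right sum.swap[of _ "{..<n}"])
  also have "\<dots> \<le> r * (\<Sum>j<m. \<Sum>k<p. c * (W $$ (k,j))^2)"
    using col_sum \<open>r \<ge> 0\<close> by (intro mult_left_mono sum_mono mult_right_mono) auto
  also have "\<dots> = r * c * frob_norm W ^ 2"
    using W by (simp add: frob_norm_sq sum_distrib_left mult_ac) (rule sum.swap)
  finally show ?thesis .
qed

lemma mult_transpose_cancel:
  fixes A B u :: "'a :: comm_ring_1 mat"
  assumes A: "A \<in> carrier_mat n n" and B: "B \<in> carrier_mat n n" and BA: "B * A = 1\<^sub>m n"
    and u: "u \<in> carrier_mat n n"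
  shows "B * (A * u * transpose_mat A) * transpose_mat B = u"
proof -
  have "B * (A * u * transpose_mat A) * transpose_mat B
      = (B * A) * u * (transpose_mat A * transpose_mat B)"
    using A B u by (simp add: assoc_mult_mat[of _ n n _ n _ n])
  also have "transpose_mat A * transpose_mat B = 1\<^sub>m n"
    using transpose_mult[OF B A] BA by simp
  finally show ?thesis
    using BA u by simp
qed

subsection \<open>The difference matrix\<close>

lemma carrier_Dmat [simp]: "Dmat N \<in> carrier_mat N N"
  and dim_Dmat [simp]: "dim_row (Dmat N) = N" "dim_col (Dmat N) = N"
  by (simp_all add: Dmat_def)

lemma index_Dmat:
  "i < N \<Longrightarrow> j < N \<Longrightarrow> Dmat N $$ (i,j) = (if i = j then 1 else if i = j + 1 then -1 else 0)"
  by (simp add: Dmat_def)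

lemma det_Dmat: "det (Dmat N) = 1"
proof -
  have "det (Dmat N) = prod_list (diag_mat (Dmat N))"
    by (rule det_lower_triangular[where n = N]) (auto simp: Dmat_def)
  also have "diag_mat (Dmat N) = map (\<lambda>_. 1) [0..<N]"
    by (auto simp: diag_mat_def Dmat_def)
  finally show ?thesis by (simp add: map_replicate_const)
qed

lemma Dinv_inverse:
  "Dinv N \<in> carrier_mat N N" "Dmat N * Dinv N = 1\<^sub>m N" "Dinv N * Dmat N = 1\<^sub>m N"
proof -
  have "Dmat N \<in> Units (ring_mat TYPE(real) N undefined)"
    using det_non_zero_imp_unit[OF carrier_Dmat] by (simp add: det_Dmat)
  then have "\<exists>B. B \<in> carrier_mat N N \<and> Dmat N * B = 1\<^sub>m N \<and> B * Dmat N = 1\<^sub>m N"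
    by (auto simp: Units_def ring_mat_def)
  then have "Dinv N \<in> carrier_mat N N \<and> Dmat N * Dinv N = 1\<^sub>m N \<and> Dinv N * Dmat N = 1\<^sub>m N"
    unfolding Dinv_def by (rule someI_ex)
  then show "Dinv N \<in> carrier_mat N N" "Dmat N * Dinv N = 1\<^sub>m N" "Dinv N * Dmat N = 1\<^sub>m N"
    by auto
qed

lemma Dmat_row_abs_sum_le: "k < N \<Longrightarrow> (\<Sum>j<N. \<bar>Dmat N $$ (k,j)\<bar>) \<le> 2"
proof -
  assume k: "k < N"
  have "(\<Sum>j<N. \<bar>Dmat N $$ (k,j)\<bar>) \<le> (\<Sum>j<N. (if j = k then 1 else 0) + (if j = k - 1 then 1 else 0))"
    by (intro sum_mono) (auto simp: index_Dmat k)
  also have "\<dots> \<le> 2"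
    by (simp add: sum.distrib)
  finally show ?thesis .
qed

lemma Dmat_col_abs_sum_le: "j < N \<Longrightarrow> (\<Sum>k<N. \<bar>Dmat N $$ (k,j)\<bar>) \<le> 2"
proof -
  assume j: "j < N"
  have "(\<Sum>k<N. \<bar>Dmat N $$ (k,j)\<bar>) \<le> (\<Sum>k<N. (if k = j then 1 else 0) + (if k = j + 1 then 1 else 0))"
    by (intro sum_mono) (auto simp: index_Dmat j)
  also have "\<dots> \<le> 2"
    by (simp add: sum.distrib)
  finally show ?thesis .
qed

lemma l1_norm_mult_Dmat_le: "M \<in> carrier_mat n N \<Longrightarrow> l1_norm (M * Dmat N) \<le> 2 * l1_norm M"
  using l1_norm_mult_le[OF _ carrier_Dmat Dmat_row_abs_sum_le] .

lemma frob_norm_transpose_Dmat_mult_le: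
  assumes W: "W \<in> carrier_mat N m"
  shows "frob_norm (transpose_mat (Dmat N) * W) \<le> 2 * frob_norm W"
proof (rule power2_le_imp_le)
  have "frob_norm (transpose_mat (Dmat N) * W) ^ 2 \<le> 2 * 2 * frob_norm W ^ 2"
    by (rule frob_norm_mult_sq_le[of _ N N, OF _ W])
      (auto simp: Dmat_row_abs_sum_le Dmat_col_abs_sum_le)
  then show "frob_norm (transpose_mat (Dmat N) * W) ^ 2 \<le> (2 * frob_norm W) ^ 2"
    by (simp add: power_mult_distrib)
qed (simp add: frob_norm_nonneg)

lemma frob_norm_mult_Dmat_le:
  assumes W: "W \<in> carrier_mat n N"
  shows "frob_norm (W * Dmat N) \<le> 2 * frob_norm W"
proof -
  have "W * Dmat N = transpose_mat (transpose_mat (Dmat N) * transpose_mat W)"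
    using W transpose_mult[of "transpose_mat (Dmat N)" N N "transpose_mat W" n] by simp
  then show ?thesis
    using frob_norm_transpose_Dmat_mult_le[of "transpose_mat W" N n] W
    by (simp add: frob_norm_transpose)
qed

lemma feasible_iff_Dmat_conj:
  assumes Z: "Z \<in> carrier_mat N N" and q: "q \<in> carrier_mat N N"
  shows "feasible N \<delta> q Z \<longleftrightarrow>
    (\<exists>v\<in>carrier_mat N N. Z - q = Dmat N * v * transpose_mat (Dmat N) \<and> max_norm v \<le> \<delta> / 2)"
proof
  assume "feasible N \<delta> q Z"
  define v where "v = Dinv N * (Z - q) * transpose_mat (Dinv N)"
  have v: "v \<in> carrier_mat N N"
    using q Dinv_inverse(1)[of N] unfolding v_def carrier_mat_def by auto
  have "Dmat N * v * transpose_mat (Dmat N) = Z - q"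
    unfolding v_def using Z q Dinv_inverse by (intro mult_transpose_cancel) (auto simp: minus_carrier_mat)
  moreover have "max_norm v \<le> \<delta> / 2"
    using \<open>feasible N \<delta> q Z\<close> by (simp add: feasible_def v_def)
  ultimately show "\<exists>v\<in>carrier_mat N N. Z - q = Dmat N * v * transpose_mat (Dmat N) \<and> max_norm v \<le> \<delta> / 2"
    using v by metis
next
  assume "\<exists>v\<in>carrier_mat N N. Z - q = Dmat N * v * transpose_mat (Dmat N) \<and> max_norm v \<le> \<delta> / 2"
  then obtain v where v: "v \<in> carrier_mat N N" and "Z - q = Dmat N * v * transpose_mat (Dmat N)"
    and "max_norm v \<le> \<delta> / 2"
    by blast
  moreover have "Dinv N * (Dmat N * v * transpose_mat (Dmat N)) * transpose_mat (Dinv N) = v"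
    using v Dinv_inverse by (intro mult_transpose_cancel) auto
  ultimately show "feasible N \<delta> q Z"
    using Z by (simp add: feasible_def)
qed

subsection \<open>The cone condition\<close>

lemma abs_le_abs_add_diff: "\<bar>g::real\<bar> \<le> \<bar>a + g\<bar> - \<bar>a\<bar> + 2 * (if a \<noteq> 0 then \<bar>g\<bar> else 0)"
  by (cases "a = 0") auto

lemma l1_norm_le_l1_norm_add_diff:
  assumes a: "a \<in> carrier_mat n m" and g: "g \<in> carrier_mat n m"
  shows "l1_norm g \<le> l1_norm (a + g) - l1_norm a
    + 2 * (\<Sum>i<n. \<Sum>j<m. if a $$ (i,j) \<noteq> 0 then \<bar>g $$ (i,j)\<bar> else 0)"
proof -
  have "l1_norm g \<le> (\<Sum>i<n. \<Sum>j<m. \<bar>a $$ (i,j) + g $$ (i,j)\<bar> - \<bar>a $$ (i,j)\<bar>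
      + 2 * (if a $$ (i,j) \<noteq> 0 then \<bar>g $$ (i,j)\<bar> else 0))"
    by (simp only: l1_norm_def carrier_matD[OF g]) (intro sum_mono abs_le_abs_add_diff)
  also have "\<dots> = l1_norm (a + g) - l1_norm a
      + 2 * (\<Sum>i<n. \<Sum>j<m. if a $$ (i,j) \<noteq> 0 then \<bar>g $$ (i,j)\<bar> else 0)"
    using a g by (simp add: l1_norm_def sum_subtractf sum.distrib sum_distrib_left)
  finally show ?thesis .
qed

lemma abs_sum_on_support_le:
  assumes a: "a \<in> carrier_mat n m" and g: "g \<in> carrier_mat n m"
  shows "(\<Sum>i<n. \<Sum>j<m. if a $$ (i,j) \<noteq> 0 then \<bar>g $$ (i,j)\<bar> else 0)
    \<le> sqrt (real (l0_norm a)) * frob_norm g"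
proof -
  let ?P = "{..<n} \<times> {..<m}"
  let ?ind = "\<lambda>x. if a $$ x \<noteq> 0 then 1 else (0::real)"
  have lhs: "(\<Sum>i<n. \<Sum>j<m. if a $$ (i,j) \<noteq> 0 then \<bar>g $$ (i,j)\<bar> else 0)
      = (\<Sum>x\<in>?P. ?ind x * \<bar>g $$ x\<bar>)"
    by (simp add: sum.cartesian_product case_prod_beta) (intro sum.cong, auto)
  have "(\<Sum>x\<in>?P. (?ind x)^2) = (\<Sum>x\<in>?P. if a $$ x \<noteq> 0 then 1 else 0)"
    by (intro sum.cong) auto
  also have "\<dots> = (\<Sum>x\<in>{x\<in>?P. a $$ x \<noteq> 0}. 1)"
    by (rule sum.inter_filter[symmetric]) auto
  also have "{x\<in>?P. a $$ x \<noteq> 0} = {(i,j). i < dim_row a \<and> j < dim_col a \<and> a $$ (i,j) \<noteq> 0}"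
    using a by auto
  finally have support: "(\<Sum>x\<in>?P. (?ind x)^2) = real (l0_norm a)"
    by (simp add: l0_norm_def)
  have frob: "(\<Sum>x\<in>?P. (g $$ x)^2) = frob_norm g ^ 2"
    using g by (simp add: frob_norm_sq sum.cartesian_product case_prod_beta)
  have "(\<Sum>x\<in>?P. ?ind x * \<bar>g $$ x\<bar>)^2 \<le> (\<Sum>x\<in>?P. (?ind x)^2) * (\<Sum>x\<in>?P. \<bar>g $$ x\<bar>^2)"
    by (rule Cauchy_Schwarz_ineq_sum)
  then have "(\<Sum>x\<in>?P. ?ind x * \<bar>g $$ x\<bar>)^2 \<le> (sqrt (real (l0_norm a)) * frob_norm g)^2"
    by (simp add: support frob power_mult_distrib)
  then show ?thesis
    unfolding lhs by (rule power2_le_imp_le) (simp add: frob_norm_nonneg)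
qed

lemma l1_norm_cone_bound:
  assumes a: "a \<in> carrier_mat n m" and g: "g \<in> carrier_mat n m"
    and b: "b \<in> carrier_mat n m" and h: "h \<in> carrier_mat n m"
    and descent: "l1_norm (a + g) + l1_norm (b + h) \<le> l1_norm a + l1_norm b"
    and sparse: "real (l0_norm a + l0_norm b) \<le> s"
  shows "l1_norm g + l1_norm h \<le> 2 * sqrt s * (frob_norm g + frob_norm h)"
proof -
  have "sqrt (real (l0_norm a)) \<le> sqrt s" "sqrt (real (l0_norm b)) \<le> sqrt s"
    using sparse by simp_all
  then have "sqrt (real (l0_norm a)) * frob_norm g \<le> sqrt s * frob_norm g"
    "sqrt (real (l0_norm b)) * frob_norm h \<le> sqrt s * frob_norm h"
    by (simp_all add: mult_right_mono frob_norm_nonneg)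
  then show ?thesis
    using l1_norm_le_l1_norm_add_diff[OF a g] abs_sum_on_support_le[OF a g]
      l1_norm_le_l1_norm_add_diff[OF b h] abs_sum_on_support_le[OF b h] descent
    by (simp add: algebra_simps)
qed

lemma frob_norm_sq_Dmat_conj_le:
  assumes E: "E \<in> carrier_mat N N" and W: "W = Dmat N * E * transpose_mat (Dmat N)"
    and bound: "\<And>i j. i < N \<Longrightarrow> j < N \<Longrightarrow> \<bar>E $$ (i,j)\<bar> \<le> c" and "c \<ge> 0"
  shows "frob_norm W ^ 2 \<le> 2 * c * l1_norm (transpose_mat (Dmat N) * W)"
proof -
  let ?D = "Dmat N"
  have W_carrier: "W \<in> carrier_mat N N"
    unfolding W using E by (intro mult_carrier_mat) auto
  have "W = ?D * (E * transpose_mat ?D)"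
    unfolding W using E by (intro assoc_mult_mat) auto
  then have "frob_norm W ^ 2 = inner_mat W (?D * (E * transpose_mat ?D))"
    by (metis frob_norm_sq_eq_inner_mat)
  also have "\<dots> = inner_mat (transpose_mat ?D * W) (E * transpose_mat ?D)"
    using W_carrier E by (intro inner_mat_mult_left) auto
  also have "\<dots> = inner_mat (transpose_mat ?D * W * ?D) E"
    using W_carrier E by (subst inner_mat_mult_right) auto
  also have "\<dots> \<le> c * l1_norm (transpose_mat ?D * W * ?D)"
    using W_carrier bound by (intro inner_mat_le_l1_norm) auto
  also have "\<dots> \<le> c * (2 * l1_norm (transpose_mat ?D * W))"
    using W_carrier \<open>c \<ge> 0\<close> by (intro mult_left_mono l1_norm_mult_Dmat_le) auto
  finally show ?thesis
    by simp
qed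

lemma objective_add:
  assumes X: "X \<in> carrier_mat N N" and W: "W \<in> carrier_mat N N"
  shows "objective N (X + W) = l1_norm (transpose_mat (Dmat N) * X + transpose_mat (Dmat N) * W)
    + l1_norm (X * Dmat N + W * Dmat N)"
  using mult_add_distrib_mat[of _ N N, OF _ X W] add_mult_distrib_mat[OF X W carrier_Dmat]
  by (simp add: objective_def)

lemma feasible_diff_Dmat_conj:
  assumes X: "X \<in> carrier_mat N N" and q: "q \<in> carrier_mat N N" and u: "u \<in> carrier_mat N N"
    and X_q: "X - q = Dmat N * u * transpose_mat (Dmat N)" and u_bound: "max_norm u \<le> \<delta> / 2"
    and Z_feasible: "feasible N \<delta> q Z"
  obtains E where "E \<in> carrier_mat N N" "Z - X = Dmat N * E * transpose_mat (Dmat N)"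
    "\<And>i j. i < N \<Longrightarrow> j < N \<Longrightarrow> \<bar>E $$ (i,j)\<bar> \<le> \<delta>"
proof -
  let ?D = "Dmat N"
  have Z: "Z \<in> carrier_mat N N"
    using Z_feasible by (simp add: feasible_def)
  obtain v where v: "v \<in> carrier_mat N N" and Z_q: "Z - q = ?D * v * transpose_mat ?D"
    and v_bound: "max_norm v \<le> \<delta> / 2"
    using Z_feasible feasible_iff_Dmat_conj[OF Z q] by blast
  have "?D * (v - u) * transpose_mat ?D = (Z - q) - (X - q)"
    using mult_minus_distrib_mat[OF carrier_Dmat v u]
      minus_mult_distrib_mat[OF mult_carrier_mat[OF carrier_Dmat v] mult_carrier_mat[OF carrier_Dmat u],
        of "transpose_mat ?D" N]
    by (simp add: Z_q X_q)
  also have "\<dots> = Z - X"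
    using X Z q by (intro eq_matI) auto
  finally have "Z - X = ?D * (v - u) * transpose_mat ?D" ..
  moreover have "\<bar>(v - u) $$ (i,j)\<bar> \<le> \<delta>" if "i < N" "j < N" for i j
    using abs_le_max_norm[of i v j] abs_le_max_norm[of i u j] u v u_bound v_bound that by auto
  ultimately show ?thesis
    using that[of "v - u"] u by (simp add: minus_carrier_mat)
qed

lemma sigma_delta_reconstruction_error:
  fixes X q u Xh :: "real mat"
  assumes X: "X \<in> carrier_mat N N" and q: "q \<in> carrier_mat N N" and u: "u \<in> carrier_mat N N"
    and sparse: "real (l0_norm (transpose_mat (Dmat N) * X) + l0_norm (X * Dmat N)) \<le> s"
    and X_q: "X - q = Dmat N * u * transpose_mat (Dmat N)" and u_bound: "max_norm u \<le> \<delta> / 2"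
    and Xh_feasible: "feasible N \<delta> q Xh"
    and Xh_optimal: "\<forall>Z. feasible N \<delta> q Z \<longrightarrow> objective N Xh \<le> objective N Z"
  shows "frob_norm (Xh - X) \<le> 16 * sqrt s * \<delta>"
proof -
  let ?D = "Dmat N"
  define W where "W = Xh - X"
  obtain E where E: "E \<in> carrier_mat N N" and W_eq: "W = ?D * E * transpose_mat ?D"
    and E_bound: "\<And>i j. i < N \<Longrightarrow> j < N \<Longrightarrow> \<bar>E $$ (i,j)\<bar> \<le> \<delta>"
    using feasible_diff_Dmat_conj[OF X q u X_q u_bound Xh_feasible] unfolding W_def by blast
  have W: "W \<in> carrier_mat N N" and Xh_eq: "Xh = X + W"
    using X Xh_feasible by (auto simp: W_def feasible_def minus_carrier_mat intro!: eq_matI)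
  have "\<delta> \<ge> 0"
    using u_bound max_norm_nonneg[of u] by simp
  have "s \<ge> 0"
    using sparse by (smt (verit) of_nat_0_le_iff)
  have energy: "frob_norm W ^ 2 \<le> 2 * \<delta> * l1_norm (transpose_mat ?D * W)"
    using frob_norm_sq_Dmat_conj_le[OF E W_eq E_bound \<open>\<delta> \<ge> 0\<close>] .
  have "feasible N \<delta> q X"
    using feasible_iff_Dmat_conj[OF X q] u X_q u_bound by blast
  with Xh_optimal have "objective N (X + W) \<le> objective N X"
    by (simp add: Xh_eq)
  then have "l1_norm (transpose_mat ?D * X + transpose_mat ?D * W) + l1_norm (X * ?D + W * ?D)
      \<le> l1_norm (transpose_mat ?D * X) + l1_norm (X * ?D)"
    by (simp only: objective_add[OF X W]) (simp add: objective_def)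
  then have "l1_norm (transpose_mat ?D * W) + l1_norm (W * ?D)
      \<le> 2 * sqrt s * (frob_norm (transpose_mat ?D * W) + frob_norm (W * ?D))"
    using X W sparse by (intro l1_norm_cone_bound[of _ N N]) auto
  also have "\<dots> \<le> 2 * sqrt s * (2 * frob_norm W + 2 * frob_norm W)"
    using frob_norm_transpose_Dmat_mult_le[OF W] frob_norm_mult_Dmat_le[OF W] \<open>s \<ge> 0\<close>
    by (intro mult_left_mono) auto
  finally have "l1_norm (transpose_mat ?D * W) \<le> 8 * sqrt s * frob_norm W"
    using l1_norm_nonneg[of "W * ?D"] by simp
  then have "2 * \<delta> * l1_norm (transpose_mat ?D * W) \<le> 2 * \<delta> * (8 * sqrt s * frob_norm W)"
    using \<open>\<delta> \<ge> 0\<close> by (intro mult_left_mono) auto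
  with energy have "frob_norm W * frob_norm W \<le> (16 * sqrt s * \<delta>) * frob_norm W"
    by (simp add: power2_eq_square mult_ac)
  then have "frob_norm W \<le> 16 * sqrt s * \<delta>"
    using frob_norm_nonneg[of W] \<open>\<delta> \<ge> 0\<close> \<open>s \<ge> 0\<close>
    by (cases "frob_norm W = 0") (auto dest: mult_right_le_imp_le)
  then show ?thesis
    by (simp add: W_def)
qed

theorem theorem3:
  shows "\<exists>C::real. \<forall>(N::nat) (X::real mat) (A::real set) (\<delta>::real) (q::real mat) (u::real mat)
            (s::real) (Xh::real mat).
     X \<in> carrier_mat N N \<and> (\<forall>i<N. \<forall>j<N. 0 \<le> X $$ (i,j) \<and> X $$ (i,j) \<le> 1) \<and>
     real (l0_norm (transpose_mat (Dmat N) * X) + l0_norm (X * Dmat N)) \<le> s \<and>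
     s < 2 * real N ^ 2 \<and>
     step_alphabet A \<delta> \<and> sigma_delta_2D N A X q u \<and>
     X - q = Dmat N * u * transpose_mat (Dmat N) \<and> max_norm u \<le> \<delta> / 2 \<and>
     feasible N \<delta> q Xh \<and> (\<forall>Z. feasible N \<delta> q Z \<longrightarrow> objective N Xh \<le> objective N Z)
     \<longrightarrow> frob_norm (Xh - X) \<le> C * sqrt s * \<delta>"
proof (intro exI[of _ 16] allI impI, elim conjE)
  fix N :: nat and X :: "real mat" and A :: "real set" and \<delta> :: real and q u :: "real mat"
    and s :: real and Xh :: "real mat"
  assume X: "X \<in> carrier_mat N N"
    and sparse: "real (l0_norm (transpose_mat (Dmat N) * X) + l0_norm (X * Dmat N)) \<le> s"
    and scheme: "sigma_delta_2D N A X q u"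
    and X_q: "X - q = Dmat N * u * transpose_mat (Dmat N)" and u_bound: "max_norm u \<le> \<delta> / 2"
    and Xh_feasible: "feasible N \<delta> q Xh"
    and Xh_optimal: "\<forall>Z. feasible N \<delta> q Z \<longrightarrow> objective N Xh \<le> objective N Z"
  from scheme have "q \<in> carrier_mat N N" "u \<in> carrier_mat N N"
    by (simp_all add: sigma_delta_2D_def)
  with X sparse X_q u_bound Xh_feasible Xh_optimal
  show "frob_norm (Xh - X) \<le> 16 * sqrt s * \<delta>"
    by (intro sigma_delta_reconstruction_error)
qed

end
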